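(* Let $\nu$ be a probability measure on $\mathrm{U}(d)$ and suppose the set of channels $\{\mathcal{V}:V\in\mathrm{supp}(\nu)\}$ is not an $\epsilon$-net in $\mathcal{U}(d)$. Then there exists $\mathcal{V}_0\in\mathcal{U}(d)$ such that for every integrable function $\Phi$ on $\mathcal{U}(d)$ and every $\kappa$ with $0\le\kappa\le\epsilon$, $$\int_{B(\mathcal{V}_0,\kappa)}\mathrm{d}\mu(\mathcal{U})\,(T_\nu\Phi)(\mathcal{U})\le\max_{\mathcal{V}:\,\mathrm{D}(\mathcal{V},\mathcal{I})\ge\epsilon}\int_{B(\mathcal{V},\kappa)}\mathrm{d}\mu(\mathcal{U})\,\Phi(\mathcal{U}).$$
   Context: $\mathcal{U}(d)$ is the set of unitary channels on $\mathbb{C}^d$, $\mathcal{I}$ the identity channel, $\mu$ the Haar probability measure. $\mathrm{D}(\mathcal{U},\mathcal{V})=\min_\varphi\|U-e^{i\varphi}V\|_\infty$, $B(\mathcal{V},\kappa)=\{\mathcal{U}:\mathrm{D}(\mathcal{U},\mathcal{V})\le\kappa\}$. An $\epsilon$-net is a subset such that every channel is within $\mathrm{D}$-distance $\epsilon$ of some element. $(T_\nu\Phi)(\mathcal{U})=\int\mathrm{d}\nu(V)\,\Phi(\mathcal{V}^{-1}\mathcal{U})$. *)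

theory Defs
  imports "HOL-Analysis.Analysis" "HOL-Probability.Probability"
begin

text \<open>d x d complex matrices, d = CARD('n).\<close>

definition cadj :: "complex^'n^'n \<Rightarrow> complex^'n^'n" where
  "cadj A = (\<chi> i j. cnj (A $ j $ i))"

definition unitary_mat :: "complex^'n^'n \<Rightarrow> bool" where
  "unitary_mat A \<longleftrightarrow> A ** cadj A = mat 1"

definition Ud :: "(complex^'n^'n) set" where
  "Ud = {A. unitary_mat A}"

definition cscale :: "complex \<Rightarrow> complex^'n^'n \<Rightarrow> complex^'n^'n" where
  "cscale c A = (\<chi> i j. c * A $ i $ j)"

definition opnorm :: "complex^'n^'n \<Rightarrow> real" where
  "opnorm A = onorm (\<lambda>x. A *v x)"

definition Dch :: "complex^'n^'n \<Rightarrow> complex^'n^'n \<Rightarrow> real" where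
  "Dch U V = (INF \<phi>::real. opnorm (U - cscale (cis \<phi>) V))"

definition Dball :: "complex^'n^'n \<Rightarrow> real \<Rightarrow> (complex^'n^'n) set" where
  "Dball V \<kappa> = {U \<in> Ud. Dch U V \<le> \<kappa>}"

definition Ud_borel :: "(complex^'n^'n) measure" where
  "Ud_borel = restrict_space borel Ud"

definition msupp :: "'a::topological_space measure \<Rightarrow> 'a set" where
  "msupp M = {x \<in> space M. \<forall>S. open S \<and> x \<in> S \<longrightarrow> emeasure M (S \<inter> space M) > 0}"

definition is_eps_net :: "(complex^'n^'n) set \<Rightarrow> real \<Rightarrow> bool" where
  "is_eps_net N \<epsilon> \<longleftrightarrow> N \<subseteq> Ud \<and> (\<forall>U\<in>Ud. \<exists>V\<in>N. Dch U V \<le> \<epsilon>)"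

text \<open>Haar probability measure on U(d) (left-invariant Borel probability measure;
  unique by the uniqueness of Haar measure).\<close>
definition haar_Ud :: "(complex^'n^'n) measure \<Rightarrow> bool" where
  "haar_Ud \<mu> \<longleftrightarrow> sets \<mu> = sets Ud_borel \<and> prob_space \<mu> \<and>
     (\<forall>V\<in>Ud. distr \<mu> Ud_borel (\<lambda>U. V ** U) = \<mu>)"

text \<open>Functions on unitary channels = phase-invariant functions on U(d).\<close>
definition channel_fun :: "(complex^'n^'n \<Rightarrow> real) \<Rightarrow> bool" where
  "channel_fun \<Phi> \<longleftrightarrow> (\<forall>U\<in>Ud. \<forall>\<phi>::real. \<Phi> (cscale (cis \<phi>) U) = \<Phi> U)"

definition Tnu :: "(complex^'n^'n) measure \<Rightarrow> (complex^'n^'n \<Rightarrow> real) \<Rightarrow> complex^'n^'n \<Rightarrow> real" where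
  "Tnu \<nu> \<Phi> U = (\<integral>V. \<Phi> (cadj V ** U) \<partial>\<nu>)"

end

theory Submission
  imports Defs
begin

text \<open>Choose \<open>V0\<close> at distance more than \<open>\<epsilon>\<close> from every point of the support of \<open>\<nu>\<close>.
  By Fubini, the integral of \<open>T\<^sub>\<nu>\<Phi>\<close> over \<open>B(V0,\<kappa>)\<close> is the \<open>\<nu>\<close>-average over \<open>V\<close> of the
  integral of \<open>\<Phi>(V\<^sup>* U)\<close> over that ball. Left invariance of \<open>\<mu>\<close> and of \<open>D\<close> turns the inner
  integral into the integral of \<open>\<Phi>\<close> over \<open>B(V\<^sup>* V0,\<kappa>)\<close>, and \<open>D(V\<^sup>* V0, I) = D(V0, V) > \<epsilon>\<close>
  for every \<open>V\<close> in the support, on which \<open>\<nu>\<close> is concentrated.\<close>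

section \<open>Unitary matrices\<close>

lemma cadj_nth [simp]: "cadj A $ i $ j = cnj (A $ j $ i)"
  by (simp add: cadj_def)

lemma cadj_cadj [simp]: "cadj (cadj A) = A"
  by (simp add: cadj_def vec_eq_iff)

lemma cadj_matrix_mul: "cadj (A ** B) = cadj B ** cadj A"
  by (simp add: vec_eq_iff matrix_matrix_mult_def mult.commute)

lemma cadj_matrix_vector_adjoint:
  "(\<Sum>i\<in>UNIV. (A *v x) $ i * cnj (y $ i)) = (\<Sum>j\<in>UNIV. x $ j * cnj ((cadj A *v y) $ j))"
  by (simp add: matrix_vector_mult_def sum_distrib_left sum_distrib_right mult_ac)
     (rule sum.swap)

lemma Ud_cadj_mult_self: "A \<in> Ud \<Longrightarrow> cadj A ** A = mat 1"
  by (simp add: Ud_def unitary_mat_def matrix_left_right_inverse)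

lemma Ud_mult_cadj_self: "A \<in> Ud \<Longrightarrow> A ** cadj A = mat 1"
  by (simp add: Ud_def unitary_mat_def)

lemma Ud_cadj: "A \<in> Ud \<Longrightarrow> cadj A \<in> Ud"
  by (simp add: Ud_def unitary_mat_def Ud_cadj_mult_self)

lemma Ud_matrix_mul: "A \<in> Ud \<Longrightarrow> B \<in> Ud \<Longrightarrow> A ** B \<in> Ud"
  unfolding Ud_def unitary_mat_def mem_Collect_eq
  by (metis cadj_matrix_mul matrix_mul_assoc matrix_mul_rid)

lemma Ud_cadj_cancel: "A \<in> Ud \<Longrightarrow> cadj A ** (A ** B) = B"
  by (simp add: matrix_mul_assoc Ud_cadj_mult_self)

lemma Ud_cancel_cadj: "A \<in> Ud \<Longrightarrow> A ** (cadj A ** B) = B"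
  by (simp add: matrix_mul_assoc Ud_mult_cadj_self)

lemma of_real_norm_square_vec:
  "complex_of_real ((norm (x :: complex^'n))\<^sup>2) = (\<Sum>i\<in>UNIV. x $ i * cnj (x $ i))"
proof -
  have "(norm x)\<^sup>2 = (\<Sum>i\<in>UNIV. (cmod (x $ i))\<^sup>2)"
    by (simp add: norm_vec_def L2_set_def sum_nonneg)
  then show ?thesis
    by (simp only: of_real_sum complex_norm_square)
qed

lemma norm_matrix_vector_mult_Ud:
  assumes "A \<in> Ud"
  shows "norm (A *v x) = norm x"
proof -
  have "complex_of_real ((norm (A *v x))\<^sup>2) = (\<Sum>i\<in>UNIV. (A *v x) $ i * cnj ((A *v x) $ i))"
    by (rule of_real_norm_square_vec)
  also have "\<dots> = (\<Sum>j\<in>UNIV. x $ j * cnj ((cadj A *v (A *v x)) $ j))"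
    by (rule cadj_matrix_vector_adjoint)
  also have "\<dots> = complex_of_real ((norm x)\<^sup>2)"
    using assms by (simp only: matrix_vector_mul_assoc Ud_cadj_mult_self matrix_vector_mul_lid
      of_real_norm_square_vec)
  finally show ?thesis
    by (simp only: of_real_eq_iff power2_eq_iff_nonneg norm_ge_zero)
qed

lemma opnorm_Ud_matrix_mul: "W \<in> Ud \<Longrightarrow> opnorm (W ** A) = opnorm A"
  by (simp add: opnorm_def onorm_def matrix_vector_mul_assoc[symmetric] norm_matrix_vector_mult_Ud)

lemma opnorm_nonneg: "0 \<le> opnorm A"
  unfolding opnorm_def by (rule onorm_pos_le) simp

lemma opnorm_triangle: "opnorm (A + B) \<le> opnorm A + opnorm B"
  unfolding opnorm_def matrix_vector_mult_add_rdistrib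
  by (rule onorm_triangle) simp_all

lemma opnorm_le_norm: "opnorm (A :: complex^'n^'n) \<le> real CARD('n) * real CARD('n) * norm A"
  unfolding opnorm_def
proof (rule onorm_le)
  fix x :: "complex^'n"
  have "norm ((A *v x) $ i) \<le> real CARD('n) * (norm A * norm x)" for i
  proof -
    have "norm ((A *v x) $ i) \<le> (\<Sum>j\<in>UNIV. norm (A $ i $ j) * norm (x $ j))"
      unfolding norm_mult[symmetric] matrix_vector_mult_def vec_lambda_beta by (rule norm_sum)
    also have "\<dots> \<le> (\<Sum>j::'n\<in>UNIV. norm A * norm x)"
      by (intro sum_mono mult_mono norm_ge_zero Finite_Cartesian_Product.norm_nth_le
          order_trans[OF Finite_Cartesian_Product.norm_nth_le Finite_Cartesian_Product.norm_nth_le])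
    finally show ?thesis by simp
  qed
  then have "(\<Sum>i\<in>UNIV. norm ((A *v x) $ i)) \<le> real CARD('n) * (real CARD('n) * (norm A * norm x))"
    using sum_bounded_above[of UNIV "\<lambda>i. norm ((A *v x) $ i)"] by simp
  then show "norm (A *v x) \<le> real CARD('n) * real CARD('n) * norm A * norm x"
    using L2_set_le_sum[of UNIV "\<lambda>i. norm ((A *v x) $ i)"] by (simp add: norm_vec_def mult_ac)
qed

section \<open>The distance between unitary channels\<close>

lemma matrix_mul_cscale: "W ** cscale c V = cscale c (W ** V)"
  by (simp add: vec_eq_iff matrix_matrix_mult_def cscale_def sum_distrib_left mult_ac)

lemma matrix_mul_diff_ldistrib: "(A :: 'a::ring_1^'n^'n) ** (B - C) = A ** B - A ** C"
  by (simp add: vec_eq_iff matrix_matrix_mult_def sum_subtractf right_diff_distrib)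

lemma Dch_Ud_matrix_mul: "W \<in> Ud \<Longrightarrow> Dch (W ** U) (W ** V) = Dch U V"
  by (simp add: Dch_def matrix_mul_cscale[symmetric] matrix_mul_diff_ldistrib[symmetric]
      opnorm_Ud_matrix_mul)

lemma Dch_cadj_mult_mat_1: "V \<in> Ud \<Longrightarrow> Dch (cadj V ** U) (mat 1) = Dch U V"
  using Dch_Ud_matrix_mul[of V "cadj V ** U" "mat 1"] by (simp add: Ud_cancel_cadj)

lemma matrix_mul_mem_Dball_iff:
  assumes "V \<in> Ud" "W \<in> Ud"
  shows "V ** W \<in> Dball U \<kappa> \<longleftrightarrow> W \<in> Dball (cadj V ** U) \<kappa>"
  using assms Dch_Ud_matrix_mul[OF Ud_cadj[OF \<open>V \<in> Ud\<close>], of "V ** W" U]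
  by (simp add: Dball_def Ud_matrix_mul Ud_cadj_cancel)

lemma Dch_le_opnorm: "Dch U V \<le> opnorm (U - cscale (cis \<phi>) V)"
  unfolding Dch_def by (rule cINF_lower) (auto intro: bdd_belowI[where m=0] opnorm_nonneg)

lemma Dch_le_opnorm_diff_plus_Dch: "Dch U V \<le> opnorm (U - U') + Dch U' V"
proof -
  have "Dch U V - opnorm (U - U') \<le> opnorm (U' - cscale (cis \<phi>) V)" for \<phi>
    using opnorm_triangle[of "U - U'" "U' - cscale (cis \<phi>) V"] Dch_le_opnorm[of U V \<phi>] by simp
  then have "Dch U V - opnorm (U - U') \<le> Dch U' V"
    unfolding Dch_def[of U' V] by (rule cINF_greatest[OF UNIV_not_empty])
  then show ?thesis by simp
qed

lemma continuous_on_Dch: "continuous_on A (\<lambda>U :: complex^'n^'n. Dch U V)"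
proof (rule lipschitz_on_continuous_on)
  show "(real CARD('n) * real CARD('n))-lipschitz_on A (\<lambda>U. Dch U V)"
  proof (rule lipschitz_onI)
    fix U U' :: "complex^'n^'n"
    show "dist (Dch U V) (Dch U' V) \<le> real CARD('n) * real CARD('n) * dist U U'"
      using Dch_le_opnorm_diff_plus_Dch[of U V U'] Dch_le_opnorm_diff_plus_Dch[of U' V U]
        opnorm_le_norm[of "U - U'"] opnorm_le_norm[of "U' - U"]
      by (simp add: dist_real_def dist_norm norm_minus_commute abs_le_iff)
  qed simp
qed

lemma space_Ud_borel [simp]: "space Ud_borel = Ud"
  by (simp add: Ud_borel_def space_restrict_space)

lemma Dball_in_sets_Ud_borel: "Dball V \<kappa> \<in> sets Ud_borel"
proof -
  have "closed {U. Dch U V \<le> \<kappa>}"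
    by (intro closed_Collect_le continuous_on_Dch continuous_on_const)
  moreover have "Dball V \<kappa> = Ud \<inter> {U. Dch U V \<le> \<kappa>}"
    by (auto simp: Dball_def)
  ultimately show ?thesis
    by (auto simp: Ud_borel_def sets_restrict_space)
qed

section \<open>Measurability and Haar measure on U(d)\<close>

lemma continuous_on_matrix_mul_left: "continuous_on A (\<lambda>W :: 'a::real_normed_field^'n^'n. V ** W)"
  unfolding matrix_matrix_mult_def
  by (intro continuous_on_vec_lambda continuous_on_sum continuous_on_mult continuous_on_const
      continuous_on_component continuous_on_id)

lemma continuous_on_cadj_fst_mult_snd:
  "continuous_on A (\<lambda>p :: (complex^'n^'n) \<times> (complex^'n^'n). cadj (fst p) ** snd p)"
  unfolding cadj_def matrix_matrix_mult_def
  by (intro continuous_on_vec_lambda continuous_on_sum continuous_on_mult continuous_on_cnj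
      continuous_on_component continuous_on_fst continuous_on_snd continuous_on_id)

lemma measurable_Ud_borel_continuous:
  assumes "continuous_on UNIV f" "\<And>x. x \<in> Ud \<Longrightarrow> f x \<in> Ud"
  shows "f \<in> Ud_borel \<rightarrow>\<^sub>M Ud_borel"
  unfolding Ud_borel_def
proof (rule measurable_restrict_space2)
  show "f \<in> restrict_space borel Ud \<rightarrow>\<^sub>M borel"
    by (rule measurable_restrict_space1 borel_measurable_continuous_onI assms(1))+
qed (auto simp: space_restrict_space assms(2))

lemma measurable_Ud_borel_id:
  assumes "sets M = sets Ud_borel"
  shows "(\<lambda>x. x) \<in> borel_measurable M"
  unfolding measurable_cong_sets[OF assms refl] Ud_borel_def
  by (rule measurable_restrict_space1) (rule measurable_id)

lemma measurable_matrix_mul_left_Ud: "V \<in> Ud \<Longrightarrow> (\<lambda>W. V ** W) \<in> Ud_borel \<rightarrow>\<^sub>M Ud_borel"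
  by (intro measurable_Ud_borel_continuous continuous_on_matrix_mul_left Ud_matrix_mul)

lemma sets_haar_Ud: "haar_Ud \<mu> \<Longrightarrow> sets \<mu> = sets Ud_borel"
  by (simp add: haar_Ud_def)

lemma borel_measurable_integrable_Ud:
  "haar_Ud \<mu> \<Longrightarrow> integrable \<mu> f \<Longrightarrow> f \<in> borel_measurable Ud_borel"
  using borel_measurable_integrable[of \<mu> f] by (simp add: measurable_cong_sets[OF sets_haar_Ud])

lemma haar_Ud_distr_mult:
  assumes "haar_Ud \<mu>" "V \<in> Ud"
  shows "distr \<mu> Ud_borel (\<lambda>U. V ** U) = \<mu>" and "(\<lambda>U. V ** U) \<in> \<mu> \<rightarrow>\<^sub>M Ud_borel"
proof -
  show "distr \<mu> Ud_borel (\<lambda>U. V ** U) = \<mu>"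
    using assms by (simp add: haar_Ud_def)
  show "(\<lambda>U. V ** U) \<in> \<mu> \<rightarrow>\<^sub>M Ud_borel"
    unfolding measurable_cong_sets[OF sets_haar_Ud[OF assms(1)] refl]
    by (rule measurable_matrix_mul_left_Ud[OF assms(2)])
qed

lemma haar_Ud_integral_mult:
  assumes "haar_Ud \<mu>" "V \<in> Ud" "(f :: _ \<Rightarrow> real) \<in> borel_measurable Ud_borel"
  shows "(\<integral>U. f U \<partial>\<mu>) = (\<integral>W. f (V ** W) \<partial>\<mu>)"
  using integral_distr[OF haar_Ud_distr_mult(2)[OF assms(1,2)] assms(3)]
  by (simp add: haar_Ud_distr_mult(1)[OF assms(1,2)])

lemma haar_Ud_nn_integral_mult:
  assumes "haar_Ud \<mu>" "V \<in> Ud" "f \<in> borel_measurable Ud_borel"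
  shows "(\<integral>\<^sup>+U. f U \<partial>\<mu>) = (\<integral>\<^sup>+W. f (V ** W) \<partial>\<mu>)"
  using nn_integral_distr[OF haar_Ud_distr_mult(2)[OF assms(1,2)], of f] assms(3)
  by (simp add: haar_Ud_distr_mult(1)[OF assms(1,2)] measurable_cong_sets[OF sets_haar_Ud[OF assms(1)]])

lemma haar_Ud_nn_integral_abs_cadj_mult:
  assumes haar: "haar_Ud \<mu>" and V: "V \<in> Ud" and \<Phi>: "(\<Phi> :: _ \<Rightarrow> real) \<in> borel_measurable Ud_borel"
  shows "(\<integral>\<^sup>+U. ennreal \<bar>\<Phi> (cadj V ** U)\<bar> \<partial>\<mu>) = (\<integral>\<^sup>+U. ennreal \<bar>\<Phi> U\<bar> \<partial>\<mu>)"
proof -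
  have "(\<lambda>U. ennreal \<bar>\<Phi> (cadj V ** U)\<bar>) \<in> borel_measurable Ud_borel"
    by (intro measurable_compose[OF _ measurable_ennreal] borel_measurable_abs
        measurable_compose[OF measurable_matrix_mul_left_Ud[OF Ud_cadj[OF V]] \<Phi>])
  then have "(\<integral>\<^sup>+U. ennreal \<bar>\<Phi> (cadj V ** U)\<bar> \<partial>\<mu>) = (\<integral>\<^sup>+W. ennreal \<bar>\<Phi> (cadj V ** (V ** W))\<bar> \<partial>\<mu>)"
    by (rule haar_Ud_nn_integral_mult[OF haar V])
  then show ?thesis
    by (simp add: Ud_cadj_cancel[OF V])
qed

section \<open>Averaging over the measure \<open>\<nu>\<close>\<close>

lemma measurable_cadj_fst_mult_snd:
  assumes "sets M = sets Ud_borel" "sets N = sets Ud_borel"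
  shows "(\<lambda>p. cadj (fst p) ** snd p) \<in> M \<Otimes>\<^sub>M N \<rightarrow>\<^sub>M Ud_borel"
proof -
  have "fst \<in> borel_measurable (M \<Otimes>\<^sub>M N)"
    by (rule measurable_compose[OF measurable_fst measurable_Ud_borel_id[OF assms(1)]])
  moreover have "snd \<in> borel_measurable (M \<Otimes>\<^sub>M N)"
    by (rule measurable_compose[OF measurable_snd measurable_Ud_borel_id[OF assms(2)]])
  ultimately have "(\<lambda>p. cadj (fst p) ** snd p) \<in> borel_measurable (M \<Otimes>\<^sub>M N)"
    by (rule borel_measurable_continuous_Pair[where H = "\<lambda>A B. cadj A ** B"])
      (rule continuous_on_cadj_fst_mult_snd)
  moreover have "space (M \<Otimes>\<^sub>M N) = Ud \<times> Ud"
    using sets_eq_imp_space_eq[OF assms(1)] sets_eq_imp_space_eq[OF assms(2)]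
    by (simp add: space_pair_measure)
  ultimately show ?thesis
    unfolding Ud_borel_def
    by (intro measurable_restrict_space2) (simp_all add: Pi_iff Ud_matrix_mul Ud_cadj mem_Times_iff)
qed

lemma integrable_pair_cadj_mult:
  assumes haar: "haar_Ud \<mu>" and \<nu>: "finite_measure \<nu>" "sets \<nu> = sets Ud_borel"
    and \<Phi>: "integrable \<mu> (\<Phi> :: _ \<Rightarrow> real)"
  shows "integrable (\<nu> \<Otimes>\<^sub>M \<mu>) (\<lambda>(V, U). \<Phi> (cadj V ** U))"
proof -
  interpret \<nu>: finite_measure \<nu> by (rule \<nu>(1))
  interpret \<mu>: prob_space \<mu> using haar by (simp add: haar_Ud_def)
  interpret pair_sigma_finite \<nu> \<mu> ..
  note \<Phi>_measurable = borel_measurable_integrable_Ud[OF haar \<Phi>]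
  have measurable: "(\<lambda>(V, U). \<Phi> (cadj V ** U)) \<in> borel_measurable (\<nu> \<Otimes>\<^sub>M \<mu>)"
    using measurable_compose[OF measurable_cadj_fst_mult_snd[OF \<nu>(2) sets_haar_Ud[OF haar]] \<Phi>_measurable]
    by (simp add: case_prod_beta')
  have "(\<integral>\<^sup>+p. ennreal (norm ((\<lambda>(V, U). \<Phi> (cadj V ** U)) p)) \<partial>(\<nu> \<Otimes>\<^sub>M \<mu>))
      = (\<integral>\<^sup>+V. (\<integral>\<^sup>+U. ennreal \<bar>\<Phi> (cadj V ** U)\<bar> \<partial>\<mu>) \<partial>\<nu>)"
  proof -
    have "(\<lambda>p. ennreal (norm ((\<lambda>(V, U). \<Phi> (cadj V ** U)) p))) \<in> borel_measurable (\<nu> \<Otimes>\<^sub>M \<mu>)"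
      by (rule measurable_compose[OF measurable_compose[OF measurable borel_measurable_norm]
            measurable_ennreal])
    then show ?thesis
      by (simp add: \<mu>.nn_integral_fst[symmetric])
  qed
  also have "\<dots> = (\<integral>\<^sup>+V. (\<integral>\<^sup>+U. ennreal \<bar>\<Phi> U\<bar> \<partial>\<mu>) \<partial>\<nu>)"
    using sets_eq_imp_space_eq[OF \<nu>(2)]
    by (intro nn_integral_cong haar_Ud_nn_integral_abs_cadj_mult[OF haar _ \<Phi>_measurable]) simp
  also have "\<dots> = (\<integral>\<^sup>+U. ennreal \<bar>\<Phi> U\<bar> \<partial>\<mu>) * emeasure \<nu> (space \<nu>)"
    by (rule nn_integral_const)
  also have "\<dots> < \<infinity>"
    using \<Phi> by (simp add: integrable_iff_bounded ennreal_mult_less_top less_top[symmetric]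
        ennreal_mult_eq_top_iff)
  finally show ?thesis
    by (rule integrableI_bounded[OF measurable])
qed

lemma set_integral_Tnu:
  assumes haar: "haar_Ud \<mu>" and \<nu>: "finite_measure \<nu>" "sets \<nu> = sets Ud_borel"
    and \<Phi>: "integrable \<mu> (\<Phi> :: _ \<Rightarrow> real)" and B: "B \<in> sets Ud_borel"
  shows "set_lebesgue_integral \<mu> B (Tnu \<nu> \<Phi>)
           = (\<integral>V. set_lebesgue_integral \<mu> B (\<lambda>U. \<Phi> (cadj V ** U)) \<partial>\<nu>)"
    and "integrable \<nu> (\<lambda>V. set_lebesgue_integral \<mu> B (\<lambda>U. \<Phi> (cadj V ** U)))"
proof -
  interpret \<nu>: finite_measure \<nu> by (rule \<nu>(1))
  interpret \<mu>: prob_space \<mu> using haar by (simp add: haar_Ud_def)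
  interpret pair_sigma_finite \<nu> \<mu> ..
  define F where "F V U = indicator B U * \<Phi> (cadj V ** U)" for V U
  have F: "integrable (\<nu> \<Otimes>\<^sub>M \<mu>) (case_prod F)"
  proof (rule Bochner_Integration.integrable_bound[OF integrable_pair_cadj_mult[OF haar \<nu> \<Phi>]])
    have "(\<lambda>p. indicator B (snd p) :: real) \<in> borel_measurable (\<nu> \<Otimes>\<^sub>M \<mu>)"
      using B by (simp add: sets_haar_Ud[OF haar, symmetric])
    then show "case_prod F \<in> borel_measurable (\<nu> \<Otimes>\<^sub>M \<mu>)"
      using borel_measurable_integrable[OF integrable_pair_cadj_mult[OF haar \<nu> \<Phi>]]
      unfolding F_def by (simp add: case_prod_beta' borel_measurable_times)
  qed (simp add: F_def indicator_def case_prod_beta')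
  have "(\<integral>U. (\<integral>V. F V U \<partial>\<nu>) \<partial>\<mu>) = (\<integral>V. (\<integral>U. F V U \<partial>\<mu>) \<partial>\<nu>)"
    using F by (rule Fubini_integral)
  moreover have "integrable \<nu> (\<lambda>V. \<integral>U. F V U \<partial>\<mu>)"
    using integrable_fst'[OF F] by simp
  ultimately show "set_lebesgue_integral \<mu> B (Tnu \<nu> \<Phi>)
           = (\<integral>V. set_lebesgue_integral \<mu> B (\<lambda>U. \<Phi> (cadj V ** U)) \<partial>\<nu>)"
    and "integrable \<nu> (\<lambda>V. set_lebesgue_integral \<mu> B (\<lambda>U. \<Phi> (cadj V ** U)))"
    by (simp_all add: F_def set_lebesgue_integral_def Tnu_def)
qed

lemma set_integral_Dball_cadj_mult:
  assumes haar: "haar_Ud \<mu>" and V: "V \<in> Ud" and \<Phi>: "(\<Phi> :: _ \<Rightarrow> real) \<in> borel_measurable Ud_borel"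
  shows "set_lebesgue_integral \<mu> (Dball U \<kappa>) (\<lambda>W. \<Phi> (cadj V ** W))
           = set_lebesgue_integral \<mu> (Dball (cadj V ** U) \<kappa>) \<Phi>"
proof -
  have "(\<lambda>W. indicator (Dball U \<kappa>) W * \<Phi> (cadj V ** W)) \<in> borel_measurable Ud_borel"
    by (intro borel_measurable_times borel_measurable_indicator Dball_in_sets_Ud_borel
        measurable_compose[OF measurable_matrix_mul_left_Ud[OF Ud_cadj[OF V]] \<Phi>])
  then have "set_lebesgue_integral \<mu> (Dball U \<kappa>) (\<lambda>W. \<Phi> (cadj V ** W))
      = (\<integral>W. indicator (Dball U \<kappa>) (V ** W) * \<Phi> (cadj V ** (V ** W)) \<partial>\<mu>)"
    unfolding set_lebesgue_integral_def by (simp add: haar_Ud_integral_mult[OF haar V])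
  also have "\<dots> = set_lebesgue_integral \<mu> (Dball (cadj V ** U) \<kappa>) \<Phi>"
    unfolding set_lebesgue_integral_def
  proof (rule Bochner_Integration.integral_cong[OF refl])
    fix W assume "W \<in> space \<mu>"
    then have "W \<in> Ud"
      using sets_eq_imp_space_eq[OF sets_haar_Ud[OF haar]] by simp
    then show "indicator (Dball U \<kappa>) (V ** W) * \<Phi> (cadj V ** (V ** W))
        = indicator (Dball (cadj V ** U) \<kappa>) W *\<^sub>R \<Phi> W"
      by (simp add: indicator_def matrix_mul_mem_Dball_iff[OF V] Ud_cadj_cancel[OF V])
  qed
  finally show ?thesis .
qed

lemma AE_in_msupp:
  fixes M :: "'a::second_countable_topology measure"
  assumes sets_M: "sets M = sets (restrict_space borel S)"
  shows "AE x in M. x \<in> msupp M"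
proof -
  have space_M: "space M = S"
    using sets_eq_imp_space_eq[OF sets_M] by (simp add: space_restrict_space)
  \<comment> \<open>The complement of the support is the union of all open null sets; by Lindel\<ouml>f it is a
    countable union.\<close>
  define \<N> where "\<N> = {T. open T \<and> emeasure M (T \<inter> S) = 0}"
  obtain \<N>' where \<N>': "\<N>' \<subseteq> \<N>" "countable \<N>'" "\<Union>\<N>' = \<Union>\<N>"
    using Lindelof[of \<N>] by (auto simp: \<N>_def)
  have "AE x in M. x \<notin> T" if "T \<in> \<N>'" for T
  proof (rule AE_I')
    have "open T" "emeasure M (T \<inter> S) = 0"
      using that \<N>'(1) by (auto simp: \<N>_def)
    moreover from \<open>open T\<close> have "T \<inter> S \<in> sets M"
      unfolding sets_M sets_restrict_space by auto
    ultimately show "T \<inter> S \<in> null_sets M"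
      by (simp add: null_sets_def)
  qed (auto simp: space_M)
  then have AE_outside: "AE x in M. \<forall>T\<in>\<N>'. x \<notin> T"
    by (simp add: AE_ball_countable[OF \<N>'(2)])
  have in_msupp: "x \<in> msupp M" if x: "x \<in> space M" "\<forall>T\<in>\<N>'. x \<notin> T" for x
  proof -
    have "emeasure M (T \<inter> S) \<noteq> 0" if "open T" "x \<in> T" for T
    proof
      assume "emeasure M (T \<inter> S) = 0"
      with that have "x \<in> \<Union>\<N>"
        by (auto simp: \<N>_def)
      with x(2) \<N>'(3) show False
        by auto
    qed
    then show ?thesis
      using x(1) by (simp add: msupp_def space_M zero_less_iff_neq_zero)
  qed
  show ?thesis
    using AE_outside by (rule AE_mp) (auto intro: AE_I2 in_msupp)
qed

lemma set_integral_le_integral_abs: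
  assumes "integrable M (f :: _ \<Rightarrow> real)" "A \<in> sets M"
  shows "set_lebesgue_integral M A f \<le> (\<integral>x. \<bar>f x\<bar> \<partial>M)"
  unfolding set_lebesgue_integral_def
  by (rule integral_mono[OF integrable_mult_indicator[OF assms(2,1)] integrable_abs[OF assms(1)]])
     (simp add: indicator_def abs_ge_self)

lemma set_integral_Tnu_le:
  assumes haar: "haar_Ud \<mu>" and \<nu>: "prob_space \<nu>" "sets \<nu> = sets Ud_borel"
    and \<Phi>: "integrable \<mu> (\<Phi> :: _ \<Rightarrow> real)" and B: "B \<in> sets Ud_borel"
    and bound: "AE V in \<nu>. set_lebesgue_integral \<mu> B (\<lambda>U. \<Phi> (cadj V ** U)) \<le> S"
  shows "set_lebesgue_integral \<mu> B (Tnu \<nu> \<Phi>) \<le> S"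
proof -
  interpret \<nu>: prob_space \<nu> by (rule \<nu>(1))
  note Tnu = set_integral_Tnu[OF haar \<nu>.finite_measure_axioms \<nu>(2) \<Phi> B]
  have "(\<integral>V. set_lebesgue_integral \<mu> B (\<lambda>U. \<Phi> (cadj V ** U)) \<partial>\<nu>) \<le> (\<integral>V. S \<partial>\<nu>)"
    using bound by (intro integral_mono_AE Tnu(2)) simp_all
  then show ?thesis
    by (simp add: Tnu(1) \<nu>.prob_space)
qed

lemma set_integral_cadj_mult_le_SUP:
  assumes haar: "haar_Ud \<mu>" and \<Phi>: "integrable \<mu> (\<Phi> :: _ \<Rightarrow> real)"
    and V: "V \<in> Ud" and V0: "V0 \<in> Ud" and far: "\<epsilon> \<le> Dch V0 V"
  shows "set_lebesgue_integral \<mu> (Dball V0 \<kappa>) (\<lambda>U. \<Phi> (cadj V ** U))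
           \<le> (SUP W \<in> {W \<in> Ud. Dch W (mat 1) \<ge> \<epsilon>}. set_lebesgue_integral \<mu> (Dball W \<kappa>) \<Phi>)"
proof -
  have bdd: "bdd_above ((\<lambda>W. set_lebesgue_integral \<mu> (Dball W \<kappa>) \<Phi>) ` A)" for A
  proof (rule bdd_aboveI2)
    fix W
    show "set_lebesgue_integral \<mu> (Dball W \<kappa>) \<Phi> \<le> (\<integral>U. \<bar>\<Phi> U\<bar> \<partial>\<mu>)"
      using Dball_in_sets_Ud_borel[of W \<kappa>] sets_haar_Ud[OF haar]
      by (intro set_integral_le_integral_abs[OF \<Phi>]) simp
  qed
  have "cadj V ** V0 \<in> {W \<in> Ud. Dch W (mat 1) \<ge> \<epsilon>}"
    using far V V0 by (simp add: Dch_cadj_mult_mat_1 Ud_matrix_mul Ud_cadj)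
  then show ?thesis
    using cSUP_upper[OF _ bdd]
    by (simp add: set_integral_Dball_cadj_mult[OF haar V borel_measurable_integrable_Ud[OF haar \<Phi>]])
qed

theorem lemma2:
  fixes \<nu> \<mu> :: "(complex^'n^'n) measure" and \<epsilon> :: real
  assumes "haar_Ud \<mu>"
    and "prob_space \<nu>" and "sets \<nu> = sets Ud_borel"
    and "\<not> is_eps_net (msupp \<nu>) \<epsilon>"
  shows "\<exists>V0\<in>Ud. \<forall>\<Phi> \<kappa>. channel_fun \<Phi> \<and> integrable \<mu> \<Phi> \<and> 0 \<le> \<kappa> \<and> \<kappa> \<le> \<epsilon> \<longrightarrow>
           set_lebesgue_integral \<mu> (Dball V0 \<kappa>) (Tnu \<nu> \<Phi>)
             \<le> (SUP V \<in> {V \<in> Ud. Dch V (mat 1) \<ge> \<epsilon>}. set_lebesgue_integral \<mu> (Dball V \<kappa>) \<Phi>)"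
proof -
  have supp: "msupp \<nu> \<subseteq> Ud"
    using sets_eq_imp_space_eq[OF assms(3)] by (auto simp: msupp_def)
  then obtain V0 where V0: "V0 \<in> Ud" and far: "\<And>V. V \<in> msupp \<nu> \<Longrightarrow> \<epsilon> < Dch V0 V"
    using assms(4) unfolding is_eps_net_def by (auto simp: not_le)
  show ?thesis
  proof (intro bexI[OF _ V0] allI impI)
    fix \<Phi> :: "complex^'n^'n \<Rightarrow> real" and \<kappa> :: real
    assume "channel_fun \<Phi> \<and> integrable \<mu> \<Phi> \<and> 0 \<le> \<kappa> \<and> \<kappa> \<le> \<epsilon>"
    then have \<Phi>: "integrable \<mu> \<Phi>" by simp
    show "set_lebesgue_integral \<mu> (Dball V0 \<kappa>) (Tnu \<nu> \<Phi>)
        \<le> (SUP V \<in> {V \<in> Ud. Dch V (mat 1) \<ge> \<epsilon>}. set_lebesgue_integral \<mu> (Dball V \<kappa>) \<Phi>)"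
    proof (rule set_integral_Tnu_le[OF assms(1-3) \<Phi> Dball_in_sets_Ud_borel])
      show "AE V in \<nu>. set_lebesgue_integral \<mu> (Dball V0 \<kappa>) (\<lambda>U. \<Phi> (cadj V ** U))
          \<le> (SUP V \<in> {V \<in> Ud. Dch V (mat 1) \<ge> \<epsilon>}. set_lebesgue_integral \<mu> (Dball V \<kappa>) \<Phi>)"
        using AE_in_msupp[OF assms(3)[unfolded Ud_borel_def]]
        by (rule AE_mp) (use supp in
            \<open>auto intro!: AE_I2 set_integral_cadj_mult_le_SUP[OF assms(1) \<Phi> _ V0 less_imp_le[OF far]]\<close>)
    qed
  qed
qed

end
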